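(* In the setup described in the context, for all vector fields $x,y$, $$\tilde\rho(x,y)=\rho(x,y)+\tfrac18(3\tilde\tau^*+\tilde\tau-3\tau-\tau^* )\,g(x,y)+\tfrac18(3\tilde\tau+\tilde\tau^*-3\tau^*-\tau)\,\tilde g(x,y).$$
   Context: Let $M$ be a 3-dimensional smooth manifold. Fix a coordinate chart $(x^1,x^2,x^3)$ with coordinate vector fields $\partial_i$. Structures: - $g$ is a Riemannian metric with $g(\partial_1,\partial_1)=g(\partial_2,\partial_2)=A$, $g(\partial_3,\partial_3)=B$ and $g(\partial_i,\partial_j)=0$ for $i\ne j$. Here $A,B$ are smooth positive functions. - $Q$ is the $(1,1)$-tensor field with $Q\partial_1=\partial_2$, $Q\partial_2=-\partial_1$, $Q\partial_3=\partial_3$. - $P=Q^2$. - $\tilde g(x,y)=g(x,Py)$ is the associated indefinite metric, with components $\mathrm{diag}(-A,-A,B)$. Connections and curvature: - $\nabla$ and $\tilde\nabla$ are the Levi-Civita connections of $g$ and $\tilde g$. - $R(x,y)z=\nabla_x\nabla_yz-\nabla_y\nabla_xz-\nabla_{[x,y]}z$ and $R(x,y,z,t)=g(R(x,y)z,t)$. Analogously $\tilde R$ is built from $\tilde\nabla$, with $\tilde R(x,y,z,t)=\tilde g(\tilde R(x,y)z,t)$. Ricci tensors and scalar quantities ($\{e_i\}$ a basis; $g^{ij}$ and $\tilde g^{ij}$ are the inverse matrices of $g_{ij}$ and $\tilde g_{ij}$): - $\rho(y,z)=g^{ij}R(e_i,y,z,e_j)$ and $\tau=g^{ij}\rho(e_i,e_j)$.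 - $\tilde\rho(y,z)=\tilde g^{ij}\tilde R(e_i,y,z,e_j)$ and $\tilde\tau=\tilde g^{ij}\tilde\rho(e_i,e_j)$. - $\tau^*=\tilde g^{ij}\rho(e_i,e_j)$ and $\tilde\tau^*=g^{ij}\tilde\rho(e_i,e_j)$. *)

theory Defs
  imports "HOL-Analysis.Analysis"
begin

text \<open>Local coordinates: points of the chart domain are vectors in real^3,
  coordinate index i :: 3, coordinate vector field partial_i = axis i 1.
  We take partial_1, partial_2, partial_3 to be the indices 1, 2, 3 of type 3.\<close>

type_synonym pt = "real^3"
type_synonym vf = "pt \<Rightarrow> real^3"
type_synonym mfield = "pt \<Rightarrow> real^3^3"

definition pd :: "3 \<Rightarrow> (pt \<Rightarrow> real) \<Rightarrow> pt \<Rightarrow> real" where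
  "pd i f p = frechet_derivative f (at p) (axis i 1)"

fun ipd :: "3 list \<Rightarrow> (pt \<Rightarrow> real) \<Rightarrow> pt \<Rightarrow> real" where
  "ipd [] f = f"
| "ipd (i # is) f = pd i (ipd is f)"

definition smooth_on :: "pt set \<Rightarrow> (pt \<Rightarrow> real) \<Rightarrow> bool" where
  "smooth_on U f \<longleftrightarrow> (\<forall>is. \<forall>p\<in>U. ipd is f differentiable (at p))"

definition smooth_vf :: "pt set \<Rightarrow> vf \<Rightarrow> bool" where
  "smooth_vf U X \<longleftrightarrow> (\<forall>k. smooth_on U (\<lambda>q. X q $ k))"

definition coord :: "3 \<Rightarrow> vf" where
  "coord i = (\<lambda>q. axis i 1)"

definition metric :: "mfield \<Rightarrow> vf \<Rightarrow> vf \<Rightarrow> pt \<Rightarrow> real" where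
  "metric G X Y p = X p \<bullet> (G p *v Y p)"

definition ginv :: "mfield \<Rightarrow> pt \<Rightarrow> real^3^3" where
  "ginv G p = matrix_inv (G p)"

definition christ :: "mfield \<Rightarrow> 3 \<Rightarrow> 3 \<Rightarrow> 3 \<Rightarrow> pt \<Rightarrow> real" where
  "christ G k i j p = (1/2) * (\<Sum>l\<in>UNIV. ginv G p $ k $ l *
     (pd i (\<lambda>q. G q $ j $ l) p + pd j (\<lambda>q. G q $ i $ l) p - pd l (\<lambda>q. G q $ i $ j) p))"

definition cov :: "mfield \<Rightarrow> vf \<Rightarrow> vf \<Rightarrow> vf" where
  "cov G X Y = (\<lambda>p. \<chi> k. \<Sum>i\<in>UNIV. X p $ i *
     (pd i (\<lambda>q. Y q $ k) p + (\<Sum>j\<in>UNIV. christ G k i j p * Y p $ j)))"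

definition bracket :: "vf \<Rightarrow> vf \<Rightarrow> vf" where
  "bracket X Y = (\<lambda>p. \<chi> k. \<Sum>i\<in>UNIV.
     X p $ i * pd i (\<lambda>q. Y q $ k) p - Y p $ i * pd i (\<lambda>q. X q $ k) p)"

definition curv :: "mfield \<Rightarrow> vf \<Rightarrow> vf \<Rightarrow> vf \<Rightarrow> vf" where
  "curv G X Y Z = (\<lambda>p. cov G X (cov G Y Z) p - cov G Y (cov G X Z) p - cov G (bracket X Y) Z p)"

definition curv4 :: "mfield \<Rightarrow> vf \<Rightarrow> vf \<Rightarrow> vf \<Rightarrow> vf \<Rightarrow> pt \<Rightarrow> real" where
  "curv4 G X Y Z T p = metric G (curv G X Y Z) T p"

definition ricci :: "mfield \<Rightarrow> vf \<Rightarrow> vf \<Rightarrow> pt \<Rightarrow> real" where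
  "ricci G Y Z p = (\<Sum>i\<in>UNIV. \<Sum>j\<in>UNIV. ginv G p $ i $ j * curv4 G (coord i) Y Z (coord j) p)"

definition rtrace :: "mfield \<Rightarrow> mfield \<Rightarrow> pt \<Rightarrow> real" where
  "rtrace H G p = (\<Sum>i\<in>UNIV. \<Sum>j\<in>UNIV. ginv H p $ i $ j * ricci G (coord i) (coord j) p)"

definition gmat :: "(pt \<Rightarrow> real) \<Rightarrow> (pt \<Rightarrow> real) \<Rightarrow> mfield" where
  "gmat A B = (\<lambda>p. vector [vector [A p, 0, 0], vector [0, A p, 0], vector [0, 0, B p]])"

text \<open>Q partial_1 = partial_2, Q partial_2 = - partial_1, Q partial_3 = partial_3
  (columns of the matrix are the images of the coordinate vectors).\<close>
definition Qmat :: "real^3^3" where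
  "Qmat = vector [vector [0, -1, 0], vector [1, 0, 0], vector [0, 0, 1]]"

definition Pmat :: "real^3^3" where
  "Pmat = Qmat ** Qmat"

text \<open>Associated metric gt(x,y) = g(x, P y), i.e. matrix G P.\<close>
definition gtmat :: "(pt \<Rightarrow> real) \<Rightarrow> (pt \<Rightarrow> real) \<Rightarrow> mfield" where
  "gtmat A B = (\<lambda>p. gmat A B p ** Pmat)"

end

theory Submission
  imports Defs
begin

text \<open>Both metrics are diagonal in the chart: g = diag(A, A, B) and g~ = diag(-A, -A, B).
  Computing the Ricci tensor of diag(a, a, b) from its Christoffel symbols, one finds that replacing
  a by -a leaves the off-diagonal coordinate components unchanged and shifts the components
  11 and 22 by the same amount. Hence \<rho>~ - \<rho> = diag(d, d, e) in coordinates, and the two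
  unknowns d, e are recovered linearly from the four traces; since g - g~ = diag(2A, 2A, 0) and
  g + g~ = diag(0, 0, 2B), the stated combination of g and g~ is exactly diag(d, d, e).
  Passing from the invariant definition of the curvature to its coordinate formula needs the
  symmetry of second partial derivatives of the vector fields, which follows from the mean value
  theorem.\<close>

subsection \<open>Partial derivatives and smoothness\<close>

lemma pd_eq_has_derivative: "(f has_derivative f') (at p) \<Longrightarrow> pd i f p = f' (axis i 1)"
  unfolding pd_def by (metis frechet_derivative_at)

lemma pd_cong_open:
  assumes "open U" "p \<in> U" "\<forall>q\<in>U. f q = g q"
  shows "pd i f p = pd i g p"
proof -
  have "(f has_derivative D) (at p) \<longleftrightarrow> (g has_derivative D) (at p)" for D
    using assms has_derivative_transform_within_open[of f D p UNIV U g]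
      has_derivative_transform_within_open[of g D p UNIV U f] by auto
  then show ?thesis unfolding pd_def frechet_derivative_def by simp
qed

lemma differentiable_cong_open:
  assumes "open U" "p \<in> U" "\<forall>q\<in>U. f q = g q" "f differentiable (at p)"
  shows "g differentiable (at p)"
  using assms has_derivative_transform_within_open[of f _ p UNIV U g]
  unfolding differentiable_def by blast

lemma pd_const: "pd i (\<lambda>q. c) p = 0"
  unfolding pd_def by simp

lemma pd_add:
  "f differentiable (at p) \<Longrightarrow> g differentiable (at p) \<Longrightarrow>
   pd i (\<lambda>q. f q + g q) p = pd i f p + pd i g p"
  unfolding frechet_derivative_works
  by (drule (1) has_derivative_add, drule pd_eq_has_derivative) (simp add: pd_def)

lemma pd_diff:
  "f differentiable (at p) \<Longrightarrow> g differentiable (at p) \<Longrightarrow>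
   pd i (\<lambda>q. f q - g q) p = pd i f p - pd i g p"
  unfolding frechet_derivative_works
  by (drule (1) has_derivative_diff, drule pd_eq_has_derivative) (simp add: pd_def)

lemma pd_mult:
  "f differentiable (at p) \<Longrightarrow> g differentiable (at p) \<Longrightarrow>
   pd i (\<lambda>q. f q * g q :: real) p = f p * pd i g p + pd i f p * g p"
  unfolding frechet_derivative_works
  by (drule (1) has_derivative_mult, drule pd_eq_has_derivative) (simp add: pd_def)

lemma pd_cmult: "f differentiable (at p) \<Longrightarrow> pd i (\<lambda>q. c * f q :: real) p = c * pd i f p"
  using pd_mult[OF differentiable_const] by (simp add: pd_const)

lemma pd_minus: "f differentiable (at p) \<Longrightarrow> pd i (\<lambda>q. - f q :: real) p = - pd i f p"
  using pd_cmult[of f p i "-1"] by simp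

lemma pd_sum:
  "(\<And>k. k \<in> S \<Longrightarrow> f k differentiable (at p)) \<Longrightarrow>
   pd i (\<lambda>q. \<Sum>k\<in>S. f k q :: real) p = (\<Sum>k\<in>S. pd i (f k) p)"
  unfolding frechet_derivative_works
  by (drule has_derivative_sum, drule pd_eq_has_derivative) (simp add: pd_def)

lemma pd_divide:
  assumes "f differentiable (at p)" "g differentiable (at p)" "g p \<noteq> 0"
  shows "pd i (\<lambda>q. f q / g q :: real) p = pd i f p / g p - f p * pd i g p / (g p)\<^sup>2"
  using pd_eq_has_derivative[OF has_derivative_divide[OF assms(1,2)[unfolded frechet_derivative_works] assms(3)]]
  by (simp add: pd_def power2_eq_square divide_inverse)

lemma pd_if: "pd i (\<lambda>q. if C then f q else g q) p = (if C then pd i f p else pd i g p)"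
  by (cases C) simp_all

lemma ipd_pd: "ipd is (pd i f) = ipd (is @ [i]) f"
  by (induction "is") simp_all

lemma smooth_on_differentiable: "smooth_on U f \<Longrightarrow> q \<in> U \<Longrightarrow> f differentiable (at q)"
  unfolding smooth_on_def by (metis ipd.simps(1))

lemma smooth_on_pd: "smooth_on U f \<Longrightarrow> smooth_on U (pd i f)"
  unfolding smooth_on_def ipd_pd by blast

lemma ipd_minus:
  assumes "open U" "smooth_on U f" "q \<in> U"
  shows "ipd is (\<lambda>q. - f q) q = - ipd is f q"
  using assms(3)
proof (induction "is" arbitrary: q)
  case (Cons i "is")
  have "pd i (ipd is (\<lambda>q. - f q)) q = pd i (\<lambda>q. - ipd is f q) q"
    by (rule pd_cong_open[OF assms(1) Cons.prems]) (use Cons.IH in blast)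
  also have "\<dots> = - pd i (ipd is f) q"
    using assms(2) Cons.prems by (intro pd_minus) (simp add: smooth_on_def)
  finally show ?case by simp
qed simp

lemma smooth_on_minus:
  assumes "open U" "smooth_on U f"
  shows "smooth_on U (\<lambda>q. - f q)"
  unfolding smooth_on_def
proof (intro allI ballI)
  fix "is" q assume q: "q \<in> U"
  have "(\<lambda>q. - ipd is f q) differentiable (at q)"
    using assms(2) q unfolding smooth_on_def by (blast intro: differentiable_minus)
  moreover have "\<forall>q\<in>U. - ipd is f q = ipd is (\<lambda>q. - f q) q"
    using ipd_minus[OF assms] by simp
  ultimately show "ipd is (\<lambda>q. - f q) differentiable (at q)"
    by (rule differentiable_cong_open[OF assms(1) q, rotated])
qed

lemma smooth_on_const: "smooth_on U (\<lambda>q. c)"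
proof -
  have "ipd is (\<lambda>q. c) = (\<lambda>q. if is = [] then c else 0)" for "is"
  proof (induction "is")
    case (Cons i "is")
    have "pd i (\<lambda>q. if is = [] then c else 0) = (\<lambda>q. 0)"
      by (rule ext) (rule pd_const)
    then show ?case by (simp only: ipd.simps Cons.IH) simp
  qed simp
  then show ?thesis unfolding smooth_on_def by (simp del: ipd.simps)
qed

subsection \<open>Symmetry of second partial derivatives\<close>

lemma has_derivative_along_axis:
  fixes f :: "pt \<Rightarrow> real"
  assumes "f differentiable (at (v + s *\<^sub>R axis j 1))"
  shows "((\<lambda>s. f (v + s *\<^sub>R axis j 1)) has_derivative
      (\<lambda>h. h * pd j f (v + s *\<^sub>R axis j 1))) (at s)"
proof -
  let ?q = "v + s *\<^sub>R axis j 1"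
  have "((\<lambda>s. v + s *\<^sub>R axis j 1) has_derivative (\<lambda>h. h *\<^sub>R axis j 1)) (at s)"
    by (auto intro!: derivative_eq_intros)
  from has_derivative_compose[OF this assms[unfolded frechet_derivative_works]]
  have "((\<lambda>s. f (v + s *\<^sub>R axis j 1)) has_derivative
      (\<lambda>h. frechet_derivative f (at ?q) (h *\<^sub>R axis j 1))) (at s)" .
  moreover have "frechet_derivative f (at ?q) (h *\<^sub>R axis j 1) = h * pd j f ?q" for h
    using linear_cmul[OF linear_frechet_derivative[OF assms]] unfolding pd_def by simp
  ultimately show ?thesis by simp
qed

definition second_difference :: "(pt \<Rightarrow> real) \<Rightarrow> pt \<Rightarrow> 3 \<Rightarrow> 3 \<Rightarrow> real \<Rightarrow> real" where
  "second_difference f p i j t =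
     f (p + t *\<^sub>R axis i 1 + t *\<^sub>R axis j 1) - f (p + t *\<^sub>R axis i 1) - f (p + t *\<^sub>R axis j 1) + f p"

lemma second_difference_commute: "second_difference f p i j t = second_difference f p j i t"
  unfolding second_difference_def by (simp add: add.commute add.left_commute)

lemma second_difference_mean_value:
  fixes f :: "pt \<Rightarrow> real"
  assumes df: "\<forall>q\<in>ball p r. f differentiable (at q)" and t: "0 < t" "2 * t < r"
  obtains \<xi> where "0 < \<xi>" "\<xi> < t" "second_difference f p i j t
      = t * (pd j f (p + t *\<^sub>R axis i 1 + \<xi> *\<^sub>R axis j 1) - pd j f (p + \<xi> *\<^sub>R axis j 1))"
proof -
  define e d :: pt where "e = axis i 1" and "d = axis j 1"
  define \<phi> where "\<phi> s = f (p + t *\<^sub>R e + s *\<^sub>R d) - f (p + s *\<^sub>R d)" for s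
  have in_ball: "p + t *\<^sub>R e + s *\<^sub>R d \<in> ball p r" "p + s *\<^sub>R d \<in> ball p r"
    if "0 \<le> s" "s \<le> t" for s
  proof -
    have "norm (t *\<^sub>R e + s *\<^sub>R d) \<le> norm (t *\<^sub>R e) + norm (s *\<^sub>R d)"
      by (rule norm_triangle_ineq)
    then have "norm (t *\<^sub>R e + s *\<^sub>R d) < r" "norm (s *\<^sub>R d) < r"
      using that t by (simp_all add: e_def d_def norm_axis_1)
    moreover have "p + x \<in> ball p r" if "norm x < r" for x
      using that by (simp add: dist_norm)
    ultimately show "p + t *\<^sub>R e + s *\<^sub>R d \<in> ball p r" "p + s *\<^sub>R d \<in> ball p r"
      by (simp_all add: add.assoc)
  qed
  have \<phi>_deriv: "(\<phi> has_derivative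
      (\<lambda>h. h * (pd j f (p + t *\<^sub>R e + s *\<^sub>R d) - pd j f (p + s *\<^sub>R d)))) (at s)"
    if "0 \<le> s" "s \<le> t" for s
  proof -
    have "f differentiable (at (p + t *\<^sub>R e + s *\<^sub>R d))" "f differentiable (at (p + s *\<^sub>R d))"
      using df in_ball[OF that] by blast+
    from has_derivative_diff[OF has_derivative_along_axis[OF this(1)[unfolded d_def]]
        has_derivative_along_axis[OF this(2)[unfolded d_def]]]
    show ?thesis
      unfolding \<phi>_def d_def by (simp add: right_diff_distrib)
  qed
  then have "continuous_on {0..t} \<phi>"
    by (meson atLeastAtMost_iff continuous_at_imp_continuous_on has_derivative_continuous)
  from mvt[OF t(1) this, of "\<lambda>s h. h * (pd j f (p + t *\<^sub>R e + s *\<^sub>R d) - pd j f (p + s *\<^sub>R d))"]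
    \<phi>_deriv
  obtain \<xi> where \<xi>: "0 < \<xi>" "\<xi> < t" and mean_value:
    "\<phi> t - \<phi> 0 = (t - 0) * (pd j f (p + t *\<^sub>R e + \<xi> *\<^sub>R d) - pd j f (p + \<xi> *\<^sub>R d))"
    by auto
  then have "second_difference f p i j t
      = t * (pd j f (p + t *\<^sub>R e + \<xi> *\<^sub>R d) - pd j f (p + \<xi> *\<^sub>R d))"
    by (simp add: \<phi>_def second_difference_def e_def d_def)
  from this[unfolded e_def d_def] show ?thesis by (rule that[OF \<xi>])
qed

lemma second_difference_quotient_close:
  fixes f :: "pt \<Rightarrow> real" and p :: pt and j :: 3
  defines "g \<equiv> pd j f" and "L \<equiv> frechet_derivative (pd j f) (at p)"
  assumes df: "\<forall>q\<in>ball p r. f differentiable (at q)" and dg: "g differentiable (at p)"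
    and approx: "\<And>y. norm (y - p) < \<delta> \<Longrightarrow>
      \<bar>g y - g p - L (y - p)\<bar> \<le> \<epsilon> / 4 * norm (y - p)"
    and t: "0 < t" "2 * t < r" "2 * t < \<delta>" and "\<epsilon> > 0"
  shows "\<bar>second_difference f p i j t / t\<^sup>2 - pd i g p\<bar> < \<epsilon>"
proof -
  obtain \<xi> where \<xi>: "0 < \<xi>" "\<xi> < t" and mean_value: "second_difference f p i j t
      = t * (g (p + t *\<^sub>R axis i 1 + \<xi> *\<^sub>R axis j 1) - g (p + \<xi> *\<^sub>R axis j 1))"
    unfolding g_def using second_difference_mean_value[OF df t(1,2)] by metis
  define y1 y2 where "y1 = p + t *\<^sub>R axis i 1 + \<xi> *\<^sub>R axis j 1" and "y2 = p + \<xi> *\<^sub>R axis j 1"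
  have "norm (y1 - p) \<le> t + \<xi>" "norm (y2 - p) \<le> \<xi>"
    using norm_triangle_ineq[of "t *\<^sub>R axis i 1" "\<xi> *\<^sub>R (axis j 1 :: pt)"] t \<xi>
    by (simp_all add: y1_def y2_def norm_axis_1)
  then have near: "norm (y1 - p) \<le> 2 * t" "norm (y2 - p) \<le> t"
    using \<xi> by linarith+
  have \<epsilon>4: "0 \<le> \<epsilon> / 4" using \<open>\<epsilon> > 0\<close> by simp
  have bounds: "\<bar>g y1 - g p - L (y1 - p)\<bar> \<le> \<epsilon> / 4 * (2 * t)"
      "\<bar>g y2 - g p - L (y2 - p)\<bar> \<le> \<epsilon> / 4 * t"
    using approx[of y1] approx[of y2] mult_left_mono[OF near(1) \<epsilon>4]
      mult_left_mono[OF near(2) \<epsilon>4] near t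
    by linarith+
  have "L (y1 - p) - L (y2 - p) = t * pd i g p"
    using linear_diff[OF linear_frechet_derivative[OF dg[unfolded g_def]], of "y1 - p" "y2 - p"]
      linear_cmul[OF linear_frechet_derivative[OF dg[unfolded g_def]], of t "axis i 1"]
    by (simp add: y1_def y2_def pd_def g_def L_def)
  then have "\<bar>(g y1 - g y2) - t * pd i g p\<bar> = \<bar>(g y1 - g p - L (y1 - p)) - (g y2 - g p - L (y2 - p))\<bar>"
    by (simp add: algebra_simps)
  also have "\<dots> \<le> \<bar>g y1 - g p - L (y1 - p)\<bar> + \<bar>g y2 - g p - L (y2 - p)\<bar>"
    by (rule abs_triangle_ineq4)
  also have "\<dots> \<le> \<epsilon> / 4 * (2 * t) + \<epsilon> / 4 * t"
    using bounds by (rule add_mono)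
  also have "\<dots> < \<epsilon> * t"
    using mult_pos_pos[OF \<open>\<epsilon> > 0\<close> t(1)] by simp
  finally have close: "\<bar>(g y1 - g y2) - t * pd i g p\<bar> < \<epsilon> * t" .
  have "t * (g y1 - g y2) / t\<^sup>2 - pd i g p = ((g y1 - g y2) - t * pd i g p) / t"
    using t by (simp add: power2_eq_square field_simps)
  with close t show ?thesis
    unfolding mean_value y1_def[symmetric] y2_def[symmetric]
    by (simp add: abs_divide pos_divide_less_eq)
qed

lemma second_difference_quotient_tendsto:
  fixes f :: "pt \<Rightarrow> real"
  assumes U: "open U" "p \<in> U" and df: "\<forall>q\<in>U. f differentiable (at q)"
    and dg: "pd j f differentiable (at p)"
  shows "((\<lambda>t. second_difference f p i j t / t\<^sup>2) \<longlongrightarrow> pd i (pd j f) p) (at_right 0)"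
proof (rule tendstoI)
  fix \<epsilon> :: real assume "\<epsilon> > 0"
  obtain r where r: "r > 0" "ball p r \<subseteq> U" using U openE by blast
  from dg[unfolded frechet_derivative_works] obtain \<delta> where "\<delta> > 0" and
    approx: "\<And>y. norm (y - p) < \<delta> \<Longrightarrow>
      \<bar>pd j f y - pd j f p - frechet_derivative (pd j f) (at p) (y - p)\<bar> \<le> \<epsilon> / 4 * norm (y - p)"
    using \<open>\<epsilon> > 0\<close> unfolding has_derivative_at_alt
    by (metis real_norm_def zero_less_divide_iff zero_less_numeral)
  have "\<bar>second_difference f p i j t / t\<^sup>2 - pd i (pd j f) p\<bar> < \<epsilon>"
    if "0 < t" "2 * t < r" "2 * t < \<delta>" for t
    using df r(2) by (intro second_difference_quotient_close[OF _ dg approx that \<open>\<epsilon> > 0\<close>]) blast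
  then show "\<forall>\<^sub>F t in at_right 0.
      dist (second_difference f p i j t / t\<^sup>2) (pd i (pd j f) p) < \<epsilon>"
    unfolding eventually_at_right_field dist_real_def using r(1) \<open>\<delta> > 0\<close>
    by (intro exI[of _ "min r \<delta> / 2"]) (auto simp: min_def split: if_splits)
qed

lemma pd_commute:
  fixes f :: "pt \<Rightarrow> real"
  assumes "open U" "p \<in> U" "\<forall>q\<in>U. f differentiable (at q)"
    and "pd j f differentiable (at p)" "pd i f differentiable (at p)"
  shows "pd i (pd j f) p = pd j (pd i f) p"
proof (rule tendsto_unique[OF trivial_limit_at_right_real])
  show "((\<lambda>t. second_difference f p i j t / t\<^sup>2) \<longlongrightarrow> pd i (pd j f) p) (at_right 0)"
    by (rule second_difference_quotient_tendsto[OF assms(1-4)])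
  show "((\<lambda>t. second_difference f p i j t / t\<^sup>2) \<longlongrightarrow> pd j (pd i f) p) (at_right 0)"
    using second_difference_quotient_tendsto[OF assms(1-3,5), of j]
    by (simp add: second_difference_commute)
qed

subsection \<open>Curvature in coordinates\<close>

type_synonym christoffel = "3 \<Rightarrow> 3 \<Rightarrow> 3 \<Rightarrow> pt \<Rightarrow> real"

definition riemann_coeff :: "christoffel \<Rightarrow> 3 \<Rightarrow> 3 \<Rightarrow> 3 \<Rightarrow> 3 \<Rightarrow> pt \<Rightarrow> real" where
  "riemann_coeff \<Gamma> l a j m p = pd a (\<Gamma> l j m) p - pd j (\<Gamma> l a m) p
     + (\<Sum>n\<in>UNIV. \<Gamma> l a n p * \<Gamma> n j m p - \<Gamma> l j n p * \<Gamma> n a m p)"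

definition ricci_coeff :: "christoffel \<Rightarrow> 3 \<Rightarrow> 3 \<Rightarrow> pt \<Rightarrow> real" where
  "ricci_coeff \<Gamma> j m p = (\<Sum>k\<in>UNIV. riemann_coeff \<Gamma> k k j m p)"

lemma ricci_coeff_cong_open:
  assumes "open U" "p \<in> U" "\<And>q k i j. q \<in> U \<Longrightarrow> \<Gamma> k i j q = \<Gamma>' k i j q"
  shows "ricci_coeff \<Gamma> j m p = ricci_coeff \<Gamma>' j m p"
proof -
  have "pd a (\<Gamma> k i j) p = pd a (\<Gamma>' k i j) p" for a k i j
    using assms by (intro pd_cong_open[of U]) auto
  then show ?thesis using assms by (simp add: ricci_coeff_def riemann_coeff_def)
qed

lemma sum_axis_mult: "(\<Sum>i\<in>UNIV. axis a (1::real) $ i * h i) = (h a :: real)"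
  by (simp add: axis_def if_distrib[of "\<lambda>x. x * _"] sum.delta cong: if_cong)

lemma cov_coord:
  "cov G (coord a) W q $ l = pd a (\<lambda>q. W q $ l) q + (\<Sum>j\<in>UNIV. christ G l a j q * W q $ j)"
  unfolding cov_def coord_def by (simp add: sum_axis_mult)

lemma bracket_coord: "bracket (coord a) Y p $ k = pd a (\<lambda>q. Y q $ k) p"
  unfolding bracket_def coord_def by (simp add: sum_axis_mult pd_const)

lemma pd_cov:
  assumes hG: "\<And>k i j. christ G k i j differentiable (at p)"
    and hY: "\<And>k. (\<lambda>q. Y q $ k) differentiable (at p)"
    and hZ: "\<And>k. (\<lambda>q. Z q $ k) differentiable (at p)"
    and hdZ: "\<And>k i. pd i (\<lambda>q. Z q $ k) differentiable (at p)"
  shows "pd a (\<lambda>q. cov G Y Z q $ l) p =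
    (\<Sum>i\<in>UNIV. pd a (\<lambda>q. Y q $ i) p
        * (pd i (\<lambda>q. Z q $ l) p + (\<Sum>j\<in>UNIV. christ G l i j p * Z p $ j))
      + Y p $ i * (pd a (pd i (\<lambda>q. Z q $ l)) p
      + (\<Sum>j\<in>UNIV. pd a (christ G l i j) p * Z p $ j + christ G l i j p * pd a (\<lambda>q. Z q $ j) p)))"
proof -
  have hG': "\<And>k i j. (\<lambda>q. christ G k i j q) differentiable (at p)"
    and hdZ': "\<And>k i. (\<lambda>q. pd i (\<lambda>q. Z q $ k) q) differentiable (at p)"
    using hG hdZ by simp_all
  show ?thesis
    unfolding cov_def vec_lambda_beta
    by (simp add: pd_sum pd_mult pd_add hY hZ hG' hdZ' differentiable_sum algebra_simps)
qed

lemma curv_coord: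
  assumes hG: "\<And>k i j. christ G k i j differentiable (at p)"
    and hY: "\<And>k. (\<lambda>q. Y q $ k) differentiable (at p)"
    and hZ: "\<And>k. (\<lambda>q. Z q $ k) differentiable (at p)"
    and hdZ: "\<And>k i. pd i (\<lambda>q. Z q $ k) differentiable (at p)"
    and hsym: "\<And>k i j. pd i (pd j (\<lambda>q. Z q $ k)) p = pd j (pd i (\<lambda>q. Z q $ k)) p"
  shows "curv G (coord a) Y Z p $ l =
    (\<Sum>j\<in>UNIV. \<Sum>m\<in>UNIV. Y p $ j * Z p $ m * riemann_coeff (christ G) l a j m p)"
proof -
  have hG': "\<And>k i j. (\<lambda>q. christ G k i j q) differentiable (at p)"
    and hdZ': "\<And>k i. (\<lambda>q. pd i (\<lambda>q. Z q $ k) q) differentiable (at p)"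
    using hG hdZ by simp_all
  have pd_cov_coord: "pd i (\<lambda>q. cov G (coord a) Z q $ k) p = pd i (pd a (\<lambda>q. Z q $ k)) p
      + (\<Sum>j\<in>UNIV. pd i (christ G k a j) p * Z p $ j + christ G k a j p * pd i (\<lambda>q. Z q $ j) p)" for i k
    unfolding cov_coord
    by (simp add: pd_mult pd_add pd_sum hY hZ hG' hdZ' differentiable_sum algebra_simps)
  have "curv G (coord a) Y Z p $ l = cov G (coord a) (cov G Y Z) p $ l - cov G Y (cov G (coord a) Z) p $ l
     - cov G (bracket (coord a) Y) Z p $ l"
    by (simp add: curv_def)
  also have "\<dots> = (\<Sum>j\<in>UNIV. \<Sum>m\<in>UNIV. Y p $ j * Z p $ m * riemann_coeff (christ G) l a j m p)"
    unfolding cov_coord pd_cov[OF hG hY hZ hdZ]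
    unfolding cov_def[of G Y] cov_def[of G "bracket (coord a) Y"] vec_lambda_beta bracket_coord pd_cov_coord
    unfolding cov_coord riemann_coeff_def sum_3 hsym[where k=l and j=a]
    by (simp add: algebra_simps)
  finally show ?thesis .
qed

lemma matrix_inv_unique:
  fixes A B :: "'a::semiring_1^'n^'n"
  assumes "A ** B = mat 1" "B ** A = mat 1"
  shows "matrix_inv A = B"
  unfolding matrix_inv_def
proof (rule some_equality)
  fix C assume C: "A ** C = mat 1 \<and> C ** A = mat 1"
  have "C = C ** (A ** B)" using assms by (simp add: matrix_mul_rid)
  also have "\<dots> = B" using C by (simp add: matrix_mul_assoc matrix_mul_lid)
  finally show "C = B" .
qed (use assms in simp)

lemma matrix_inv_left:
  fixes G :: "'a::semiring_1^'n^'n"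
  assumes "invertible G"
  shows "matrix_inv G ** G = mat 1"
  using someI_ex[OF assms[unfolded invertible_def]] unfolding matrix_inv_def by blast

lemma ricci_coord:
  assumes inv: "invertible (G p)" and sym: "transpose (G p) = G p"
    and hG: "\<And>k i j. christ G k i j differentiable (at p)"
    and hY: "\<And>k. (\<lambda>q. Y q $ k) differentiable (at p)"
    and hZ: "\<And>k. (\<lambda>q. Z q $ k) differentiable (at p)"
    and hdZ: "\<And>k i. pd i (\<lambda>q. Z q $ k) differentiable (at p)"
    and hsym: "\<And>k i j. pd i (pd j (\<lambda>q. Z q $ k)) p = pd j (pd i (\<lambda>q. Z q $ k)) p"
  shows "ricci G Y Z p = (\<Sum>j\<in>UNIV. \<Sum>m\<in>UNIV. Y p $ j * Z p $ m * ricci_coeff (christ G) j m p)"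
proof -
  let ?R = "\<lambda>a l. curv G (coord a) Y Z p $ l"
  have contract: "(\<Sum>b\<in>UNIV. ginv G p $ a $ b * G p $ l $ b) = (if a = l then 1 else 0)" for a l
  proof -
    have "G p $ l $ b = G p $ b $ l" for b
      using arg_cong[OF sym, of "\<lambda>M. M $ b $ l"] by (simp add: transpose_def)
    then have "(\<Sum>b\<in>UNIV. ginv G p $ a $ b * G p $ l $ b) = (ginv G p ** G p) $ a $ l"
      by (simp add: matrix_matrix_mult_def)
    then show ?thesis using matrix_inv_left[OF inv] by (simp add: ginv_def mat_def)
  qed
  have "ricci G Y Z p = (\<Sum>a\<in>UNIV. \<Sum>b\<in>UNIV. ginv G p $ a $ b * (\<Sum>l\<in>UNIV. ?R a l * G p $ l $ b))"
    unfolding ricci_def curv4_def metric_def inner_vec_def coord_def matrix_vector_mult_basis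
    by (simp add: column_def)
  also have "\<dots> = (\<Sum>a\<in>UNIV. \<Sum>b\<in>UNIV. \<Sum>l\<in>UNIV. ?R a l * (ginv G p $ a $ b * G p $ l $ b))"
    by (simp add: sum_distrib_left mult.left_commute)
  also have "\<dots> = (\<Sum>a\<in>UNIV. \<Sum>l\<in>UNIV. ?R a l * (\<Sum>b\<in>UNIV. ginv G p $ a $ b * G p $ l $ b))"
    by (rule sum.cong[OF refl]) (simp only: sum_distrib_left, rule sum.swap)
  also have "\<dots> = (\<Sum>a\<in>UNIV. ?R a a)"
    unfolding contract by (simp add: if_distrib[of "\<lambda>x. _ * x"] sum.delta cong: if_cong)
  also have "\<dots> =
      (\<Sum>k\<in>UNIV. \<Sum>j\<in>UNIV. \<Sum>m\<in>UNIV. Y p $ j * Z p $ m * riemann_coeff (christ G) k k j m p)"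
    unfolding curv_coord[OF hG hY hZ hdZ hsym] ..
  also have "\<dots> = (\<Sum>j\<in>UNIV. \<Sum>m\<in>UNIV. Y p $ j * Z p $ m * ricci_coeff (christ G) j m p)"
    unfolding ricci_coeff_def sum_distrib_left sum_3 by (simp add: algebra_simps)
  finally show ?thesis .
qed

subsection \<open>Diagonal metrics diag(a, a, b)\<close>

definition gdiag :: "(pt \<Rightarrow> real) \<Rightarrow> (pt \<Rightarrow> real) \<Rightarrow> 3 \<Rightarrow> pt \<Rightarrow> real" where
  "gdiag a b i = (if i = 3 then b else a)"

lemma gdiag_simps [simp]: "gdiag a b 1 = a" "gdiag a b 2 = a" "gdiag a b 3 = b"
  by (simp_all add: gdiag_def)

lemma gmat_nth: "gmat a b q $ i $ j = (if i = j then gdiag a b i q else 0)"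
  using exhaust_3[of i] exhaust_3[of j] by (auto simp: gmat_def)

lemma transpose_gmat: "transpose (gmat a b q) = gmat a b q"
  by (simp add: transpose_def vec_eq_iff gmat_nth)

lemma gtmat_eq_gmat_minus: "gtmat A B = gmat (\<lambda>q. - A q) B"
  by (rule ext) (simp add: gtmat_def Pmat_def Qmat_def gmat_def vec_eq_iff
      matrix_matrix_mult_def forall_3 sum_3)

lemma
  assumes "a q \<noteq> 0" "b q \<noteq> 0"
  shows invertible_gmat: "invertible (gmat a b q)"
    and ginv_gmat: "ginv (gmat a b) q $ i $ j = (if i = j then 1 / gdiag a b i q else 0)"
proof -
  define D :: "real^3^3" where "D = (\<chi> i j. if i = j then 1 / gdiag a b i q else 0)"
  have "gmat a b q ** D = mat 1" "D ** gmat a b q = mat 1"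
    unfolding vec_eq_iff matrix_matrix_mult_def mat_def D_def
    using assms by (simp_all add: gmat_nth sum_3 forall_3)
  then show "invertible (gmat a b q)"
    unfolding invertible_def by blast
  from matrix_inv_unique[OF \<open>gmat a b q ** D = mat 1\<close> \<open>D ** gmat a b q = mat 1\<close>]
  show "ginv (gmat a b) q $ i $ j = (if i = j then 1 / gdiag a b i q else 0)"
    by (simp add: ginv_def D_def)
qed

definition christ_diag_num :: "(pt \<Rightarrow> real) \<Rightarrow> (pt \<Rightarrow> real) \<Rightarrow> christoffel" where
  "christ_diag_num a b k i j q = (if j = k then pd i (gdiag a b k) q else 0)
     + (if i = k then pd j (gdiag a b k) q else 0) - (if i = j then pd k (gdiag a b i) q else 0)"

definition christ_diag :: "(pt \<Rightarrow> real) \<Rightarrow> (pt \<Rightarrow> real) \<Rightarrow> christoffel" where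
  "christ_diag a b k i j q = christ_diag_num a b k i j q / (2 * gdiag a b k q)"

lemma christ_gmat:
  assumes "a q \<noteq> 0" "b q \<noteq> 0"
  shows "christ (gmat a b) k i j q = christ_diag a b k i j q"
proof -
  have "gdiag a b k q \<noteq> 0" using assms by (simp add: gdiag_def)
  moreover have "pd i (\<lambda>q. gmat a b q $ j $ l) q = (if j = l then pd i (gdiag a b j) q else 0)" for i j l
    by (simp add: gmat_nth pd_if pd_const)
  ultimately show ?thesis
    unfolding christ_def ginv_gmat[of a q b, OF assms] christ_diag_def christ_diag_num_def
    by (simp add: if_distrib[of "\<lambda>x. x * _"] sum.delta field_simps cong: if_cong)
qed

lemma
  assumes "smooth_on U a" "smooth_on U b" "p \<in> U"
  shows christ_diag_num_differentiable: "christ_diag_num a b k i j differentiable (at p)"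
    and pd_christ_diag_num: "pd c (christ_diag_num a b k i j) p =
      (if j = k then pd c (pd i (gdiag a b k)) p else 0) + (if i = k then pd c (pd j (gdiag a b k)) p else 0)
      - (if i = j then pd c (pd k (gdiag a b i)) p else 0)"
proof -
  have "smooth_on U (gdiag a b l)" for l using assms by (simp add: gdiag_def)
  then have d: "(\<lambda>q. pd l (gdiag a b m) q) differentiable (at p)" for l m
    using assms(3) smooth_on_differentiable smooth_on_pd by blast
  have "(\<lambda>q. if C then f q else 0) differentiable (at p)"
    if "f differentiable (at p)" for C and f :: "pt \<Rightarrow> real"
    using that by (cases C) simp_all
  with d show "christ_diag_num a b k i j differentiable (at p)"
    "pd c (christ_diag_num a b k i j) p = (if j = k then pd c (pd i (gdiag a b k)) p else 0)
      + (if i = k then pd c (pd j (gdiag a b k)) p else 0) - (if i = j then pd c (pd k (gdiag a b i)) p else 0)"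
    unfolding christ_diag_num_def by (simp_all add: pd_add pd_diff pd_if pd_const differentiable_sum)
qed

lemma
  assumes "smooth_on U a" "smooth_on U b" "p \<in> U" "a p \<noteq> 0" "b p \<noteq> 0"
  shows christ_diag_differentiable: "christ_diag a b k i j differentiable (at p)"
    and pd_christ_diag: "pd c (christ_diag a b k i j) p = pd c (christ_diag_num a b k i j) p / (2 * gdiag a b k p)
      - christ_diag_num a b k i j p * (2 * pd c (gdiag a b k) p) / (2 * gdiag a b k p)\<^sup>2"
proof -
  have num: "(\<lambda>q. christ_diag_num a b k i j q) differentiable (at p)"
    using christ_diag_num_differentiable[OF assms(1-3)] by simp
  have "gdiag a b k differentiable (at p)"
    using assms(1-3) by (simp add: gdiag_def smooth_on_differentiable)
  then have den: "(\<lambda>q. 2 * gdiag a b k q) differentiable (at p)"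
      "pd c (\<lambda>q. 2 * gdiag a b k q) p = 2 * pd c (gdiag a b k) p"
    by (simp_all add: pd_cmult)
  have "2 * gdiag a b k p \<noteq> 0" using assms(4,5) by (simp add: gdiag_def)
  from differentiable_divide[OF num den(1) this] pd_divide[OF num den(1) this, of c]
  show "christ_diag a b k i j differentiable (at p)"
    "pd c (christ_diag a b k i j) p = pd c (christ_diag_num a b k i j) p / (2 * gdiag a b k p)
      - christ_diag_num a b k i j p * (2 * pd c (gdiag a b k) p) / (2 * gdiag a b k p)\<^sup>2"
    unfolding christ_diag_def den(2) by simp_all
qed

lemma ricci_gmat:
  assumes U: "open U" "p \<in> U" and a: "smooth_on U a" and b: "smooth_on U b"
    and nz: "\<forall>q\<in>U. a q \<noteq> 0 \<and> b q \<noteq> 0" and "smooth_vf U Y" "smooth_vf U Z"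
  shows "ricci (gmat a b) Y Z p =
    (\<Sum>j\<in>UNIV. \<Sum>m\<in>UNIV. Y p $ j * Z p $ m * ricci_coeff (christ_diag a b) j m p)"
proof -
  have Y: "smooth_on U (\<lambda>q. Y q $ k)" and Z: "smooth_on U (\<lambda>q. Z q $ k)" for k
    using assms(6,7) by (simp_all add: smooth_vf_def)
  have dY: "(\<lambda>q. Y q $ k) differentiable (at p)"
    and dZ: "(\<lambda>q. Z q $ k) differentiable (at p)"
    and dpZ: "pd i (\<lambda>q. Z q $ k) differentiable (at p)" for i k
    using Y Z U(2) by (auto intro: smooth_on_differentiable smooth_on_pd)
  have "christ (gmat a b) k i j differentiable (at p)" for k i j
    using christ_gmat nz U
    by (intro differentiable_cong_open[OF U _ christ_diag_differentiable[OF a b U(2)]]) auto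
  moreover have "pd i (pd j (\<lambda>q. Z q $ k)) p = pd j (pd i (\<lambda>q. Z q $ k)) p" for i j k
    using Z dpZ by (intro pd_commute[OF U]) (auto intro: smooth_on_differentiable)
  ultimately have "ricci (gmat a b) Y Z p
      = (\<Sum>j\<in>UNIV. \<Sum>m\<in>UNIV. Y p $ j * Z p $ m * ricci_coeff (christ (gmat a b)) j m p)"
    using nz U by (intro ricci_coord invertible_gmat transpose_gmat dY dZ dpZ) auto
  also have "\<dots> = (\<Sum>j\<in>UNIV. \<Sum>m\<in>UNIV. Y p $ j * Z p $ m * ricci_coeff (christ_diag a b) j m p)"
    using nz christ_gmat by (simp add: ricci_coeff_cong_open[OF U, of "christ (gmat a b)" "christ_diag a b"])
  finally show ?thesis .
qed

lemma ricci_gmat_coord: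
  assumes "open U" "p \<in> U" "smooth_on U a" "smooth_on U b" "\<forall>q\<in>U. a q \<noteq> 0 \<and> b q \<noteq> 0"
  shows "ricci (gmat a b) (coord i) (coord j) p = ricci_coeff (christ_diag a b) i j p"
proof -
  have vf: "smooth_vf U (coord k)" for k
    by (simp add: smooth_vf_def coord_def smooth_on_const)
  have "ricci (gmat a b) (coord i) (coord j) p
      = (\<Sum>j'\<in>UNIV. \<Sum>m\<in>UNIV. coord i p $ j' * coord j p $ m * ricci_coeff (christ_diag a b) j' m p)"
    by (rule ricci_gmat[OF assms vf vf])
  also have "\<dots> = ricci_coeff (christ_diag a b) i j p"
    unfolding coord_def by (simp add: mult.assoc sum_distrib_left[symmetric] sum_axis_mult)
  finally show ?thesis .
qed

lemma rtrace_gmat: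
  assumes "a p \<noteq> 0" "b p \<noteq> 0"
  shows "rtrace (gmat a b) G p = (\<Sum>i\<in>UNIV. ricci G (coord i) (coord i) p / gdiag a b i p)"
  unfolding rtrace_def ginv_gmat[of a p b, OF assms] by (simp add: sum_3)

lemma metric_gmat: "metric (gmat a b) X Y p = (\<Sum>i\<in>UNIV. X p $ i * gdiag a b i p * Y p $ i)"
  unfolding metric_def inner_vec_def matrix_vector_mult_def gmat_nth by (simp add: sum_3)

subsection \<open>Reversing the sign of a\<close>

lemma
  assumes U: "open U" "p \<in> U" and a: "smooth_on U a" and b: "smooth_on U b"
    and nz: "a p \<noteq> 0" "b p \<noteq> 0"
  shows ricci_coeff_christ_diag_minus_off_diag:
      "j \<noteq> m \<Longrightarrow>
        ricci_coeff (christ_diag (\<lambda>q. - a q) b) j m p = ricci_coeff (christ_diag a b) j m p"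
    and ricci_coeff_christ_diag_minus_diag:
      "ricci_coeff (christ_diag (\<lambda>q. - a q) b) 1 1 p - ricci_coeff (christ_diag a b) 1 1 p
     = ricci_coeff (christ_diag (\<lambda>q. - a q) b) 2 2 p - ricci_coeff (christ_diag a b) 2 2 p"
proof -
  have a': "smooth_on U (\<lambda>q. - a q)" using smooth_on_minus[OF U(1) a] .
  have "- a p \<noteq> 0" using nz by simp
  have minus1: "pd c (\<lambda>q. - a q) p = - pd c a p" for c
    using ipd_minus[OF U(1) a U(2), of "[c]"] by simp
  have minus2: "pd c (pd i (\<lambda>q. - a q)) p = - pd c (pd i a) p" for c i
    using ipd_minus[OF U(1) a U(2), of "[c, i]"] by simp
  note expand = ricci_coeff_def riemann_coeff_def sum_3
    pd_christ_diag[OF a b U(2) nz] pd_christ_diag[OF a' b U(2) \<open>- a p \<noteq> 0\<close> nz(2)]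
    pd_christ_diag_num[OF a b U(2)] pd_christ_diag_num[OF a' b U(2)] christ_diag_def christ_diag_num_def
  show "ricci_coeff (christ_diag (\<lambda>q. - a q) b) j m p = ricci_coeff (christ_diag a b) j m p" if "j \<noteq> m"
    using that exhaust_3[of j] exhaust_3[of m]
    by (elim disjE; simp add: expand minus1 minus2 nz field_simps)
  show "ricci_coeff (christ_diag (\<lambda>q. - a q) b) 1 1 p - ricci_coeff (christ_diag a b) 1 1 p
     = ricci_coeff (christ_diag (\<lambda>q. - a q) b) 2 2 p - ricci_coeff (christ_diag a b) 2 2 p"
    by (simp add: expand minus1 minus2 nz field_simps)
qed

lemma bilinear_trace_identity:
  fixes \<alpha> \<beta> :: real and g g' :: "3 \<Rightarrow> real" and r r' :: "3 \<Rightarrow> 3 \<Rightarrow> real"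
    and x y :: "real^3"
  assumes g: "g 1 = \<alpha>" "g 2 = \<alpha>" "g 3 = \<beta>"
    and g': "g' 1 = - \<alpha>" "g' 2 = - \<alpha>" "g' 3 = \<beta>"
    and nz: "\<alpha> \<noteq> 0" "\<beta> \<noteq> 0"
    and off_diag: "\<And>j m. j \<noteq> m \<Longrightarrow> r' j m = r j m"
    and diag: "r' 1 1 - r 1 1 = r' 2 2 - r 2 2"
  shows "(\<Sum>j\<in>UNIV. \<Sum>m\<in>UNIV. x $ j * y $ m * r' j m) =
      (\<Sum>j\<in>UNIV. \<Sum>m\<in>UNIV. x $ j * y $ m * r j m)
    + (1/8) * (3 * (\<Sum>i\<in>UNIV. r' i i / g i) + (\<Sum>i\<in>UNIV. r' i i / g' i)
               - 3 * (\<Sum>i\<in>UNIV. r i i / g i) - (\<Sum>i\<in>UNIV. r i i / g' i))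
      * (\<Sum>i\<in>UNIV. x $ i * g i * y $ i)
    + (1/8) * (3 * (\<Sum>i\<in>UNIV. r' i i / g' i) + (\<Sum>i\<in>UNIV. r' i i / g i)
               - 3 * (\<Sum>i\<in>UNIV. r i i / g' i) - (\<Sum>i\<in>UNIV. r i i / g i))
      * (\<Sum>i\<in>UNIV. x $ i * g' i * y $ i)"
proof -
  have r'22: "r' 2 2 = r' 1 1 - r 1 1 + r 2 2" using diag by simp
  show ?thesis
    unfolding sum_3 g g' r'22 using nz by (simp add: off_diag field_simps)
qed

theorem theorem4p2:
  fixes U :: "(real^3) set" and A B :: "real^3 \<Rightarrow> real"
    and X Y :: "real^3 \<Rightarrow> real^3" and p :: "real^3"
  assumes "open U"
    and "smooth_on U A" and "smooth_on U B"
    and "\<forall>q\<in>U. A q > 0 \<and> B q > 0"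
    and "smooth_vf U X" and "smooth_vf U Y"
    and "p \<in> U"
  shows "ricci (gtmat A B) X Y p =
      ricci (gmat A B) X Y p
    + (1/8) * (3 * rtrace (gmat A B) (gtmat A B) p + rtrace (gtmat A B) (gtmat A B) p
               - 3 * rtrace (gmat A B) (gmat A B) p - rtrace (gtmat A B) (gmat A B) p)
      * metric (gmat A B) X Y p
    + (1/8) * (3 * rtrace (gtmat A B) (gtmat A B) p + rtrace (gmat A B) (gtmat A B) p
               - 3 * rtrace (gtmat A B) (gmat A B) p - rtrace (gmat A B) (gmat A B) p)
      * metric (gtmat A B) X Y p"
proof -
  note U = assms(1,7) and A = assms(2) and B = assms(3) and X = assms(5) and Y = assms(6)
  have A': "smooth_on U (\<lambda>q. - A q)" using smooth_on_minus[OF U(1) A] .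
  have nz: "\<forall>q\<in>U. A q \<noteq> 0 \<and> B q \<noteq> 0" and nz': "\<forall>q\<in>U. - A q \<noteq> 0 \<and> B q \<noteq> 0"
    using assms(4) by auto
  have nzp: "A p \<noteq> 0" "B p \<noteq> 0" and nzp': "- A p \<noteq> 0" "B p \<noteq> 0"
    using nz U(2) by auto
  show ?thesis
    unfolding gtmat_eq_gmat_minus ricci_gmat[OF U A B nz X Y] ricci_gmat[OF U A' B nz' X Y]
      rtrace_gmat[of A p B, OF nzp] rtrace_gmat[of "\<lambda>q. - A q" p B, OF nzp']
      ricci_gmat_coord[OF U A B nz] ricci_gmat_coord[OF U A' B nz'] metric_gmat
    by (rule bilinear_trace_identity[where \<alpha> = "A p" and \<beta> = "B p"])
      (simp_all add: nzp ricci_coeff_christ_diag_minus_off_diag[OF U A B nzp]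
        ricci_coeff_christ_diag_minus_diag[OF U A B nzp])
qed

end
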